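(* Let $H_1$ and $H_2$ be two bipartite graphs with $\mathrm{ex}(n, H_1) = O(n^{1 + \alpha})$ and $\mathrm{ex}(n, H_2) = O(n^{1 + \beta})$. Fix $e_1 \in E(H_1)$ and $e_2 \in E(H_2)$. Then the family $\mathcal{H}$ of graphs formed by identifying $e_1$ and $e_2$ satisfies $$\mathrm{ex}(n, \mathcal{H}) = O(n^{1 + \max\{\alpha, \beta\}}).$$
   Context: For a family $\mathcal{H}$ of graphs, $\mathrm{ex}(n,\mathcal{H})$ is the maximum number of edges in an $n$-vertex graph containing no copy of any member of $\mathcal{H}$; $\mathrm{ex}(n,H)=\mathrm{ex}(n,\{H\})$. Identifying an edge $e_1=ab$ of $H_1$ with an edge $e_2=cd$ of $H_2$ means: take the vertex-disjoint union of $H_1$ and $H_2$ and either identify $a$ with $c$ and $b$ with $d$, or identify $a$ with $d$ and $b$ with $c$ (the two resulting edges become one edge). The family $\mathcal{H}$ consists of the (at most two) graphs obtained in these two ways. *)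

theory Defs
  imports Main "HOL-Library.Landau_Symbols"
begin

type_synonym 'a graph = "'a set \<times> 'a set set"

definition is_graph :: "'a graph \<Rightarrow> bool" where
  "is_graph G \<longleftrightarrow> finite (fst G) \<and>
     (\<forall>e\<in>snd G. \<exists>x y. x \<noteq> y \<and> x \<in> fst G \<and> y \<in> fst G \<and> e = {x, y})"

definition bipartite :: "'a graph \<Rightarrow> bool" where
  "bipartite G \<longleftrightarrow> (\<exists>A B. A \<inter> B = {} \<and> A \<union> B = fst G \<and>
     (\<forall>e\<in>snd G. \<exists>x y. x \<in> A \<and> y \<in> B \<and> e = {x, y}))"

definition contains_copy :: "'b graph \<Rightarrow> 'a graph \<Rightarrow> bool" where
  "contains_copy G H \<longleftrightarrow> (\<exists>f. inj_on f (fst H) \<and> f ` fst H \<subseteq> fst G \<and>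
     (\<forall>e\<in>snd H. f ` e \<in> snd G))"

definition ex :: "nat \<Rightarrow> 'a graph set \<Rightarrow> nat" where
  "ex n F = Max {card E | E. is_graph ({..<n}, E) \<and>
                   (\<forall>H\<in>F. \<not> contains_copy ({..<n}, E) H)}"

text \<open>Identifying edge ab of H1 with edge cd of H2 (a with c, b with d):
  take the disjoint union on 'a + 'b and map c to Inl a, d to Inl b.\<close>
definition glue_map :: "'b \<Rightarrow> 'b \<Rightarrow> 'a \<Rightarrow> 'a \<Rightarrow> 'b \<Rightarrow> 'a + 'b" where
  "glue_map c d a b x = (if x = c then Inl a else if x = d then Inl b else Inr x)"

definition identify :: "'a graph \<Rightarrow> 'b graph \<Rightarrow> 'a \<Rightarrow> 'a \<Rightarrow> 'b \<Rightarrow> 'b \<Rightarrow> ('a + 'b) graph" where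
  "identify H1 H2 a b c d =
     (Inl ` fst H1 \<union> glue_map c d a b ` fst H2,
      ((`) Inl) ` snd H1 \<union> ((`) (glue_map c d a b)) ` snd H2)"

definition identify_family :: "'a graph \<Rightarrow> 'b graph \<Rightarrow> 'a \<Rightarrow> 'a \<Rightarrow> 'b \<Rightarrow> 'b \<Rightarrow> ('a + 'b) graph set" where
  "identify_family H1 H2 a b c d = {identify H1 H2 a b c d, identify H1 H2 a b d c}"

end

theory Submission
  imports Defs
begin

(* Let G on n vertices contain no member of the family. The edges of G that are not the image of
   cd under any copy of H2 form an H2-free graph, so there are at most ex(n, H2) of them. Any
   other edge e lies in a copy of H2; the set W of its at most |V(H2)| further vertices must meet
   every copy of H1 that maps ab onto e, for otherwise the two copies glue to a member of the
   family. For such a "blockable" edge and a uniformly random vertex set S, with probability at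
   least 2^-(|W|+2) we have e \<subseteq> S and S \<inter> W = {}, and then e lies in no copy of H1 rooted
   at e inside G[S]. The edges of G[S] with this property form an H1-free graph, so averaging over
   S bounds the number of blockable edges by 2^(|V(H2)|+2) ex(n, H1). *)

lemma card_double_counting_le:
  assumes "finite A" "finite I"
    and "\<And>i. i \<in> I \<Longrightarrow> finite (F i)" "\<And>i. i \<in> I \<Longrightarrow> card (F i) \<le> B"
    and "\<And>a. a \<in> A \<Longrightarrow> m \<le> card {i \<in> I. a \<in> F i}"
  shows "card A * m \<le> card I * B"
proof -
  have "card A * m \<le> (\<Sum>a\<in>A. card {i \<in> I. a \<in> F i})"
    using assms(5) sum_bounded_below[of A m] by (simp add: mult.commute)
  also have "\<dots> = (\<Sum>a\<in>A. \<Sum>i\<in>I. of_bool (a \<in> F i))"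
    using assms(2) by (simp add: Int_def)
  also have "\<dots> = (\<Sum>i\<in>I. \<Sum>a\<in>A. of_bool (a \<in> F i))"
    by (rule sum.swap)
  also have "\<dots> = (\<Sum>i\<in>I. card (A \<inter> F i))"
    using assms(1) by (simp add: Int_def)
  also have "\<dots> \<le> (\<Sum>i\<in>I. B)"
    using assms(3,4) by (intro sum_mono) (meson card_mono inf_le2 order_trans)
  finally show ?thesis by simp
qed

lemma card_sets_between:
  assumes "finite X" "Y \<subseteq> X"
  shows "card {S. Y \<subseteq> S \<and> S \<subseteq> X} = 2 ^ (card X - card Y)"
proof -
  have "{S. Y \<subseteq> S \<and> S \<subseteq> X} = (\<lambda>T. T \<union> Y) ` Pow (X - Y)"
    using assms(2) by (auto intro!: image_eqI[where x = "_ - Y"])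
  moreover have "inj_on (\<lambda>T. T \<union> Y) (Pow (X - Y))"
    by (rule inj_onI) blast
  ultimately show ?thesis
    using assms by (simp add: card_image card_Pow card_Diff_subset finite_subset)
qed

lemma is_graph_edges_subset_Pow: "is_graph (V, E) \<Longrightarrow> E \<subseteq> Pow V"
  unfolding is_graph_def by fastforce

lemma is_graph_Union_edges_subset: "is_graph H \<Longrightarrow> \<Union>(snd H) \<subseteq> fst H"
  unfolding is_graph_def by fastforce

lemma finite_card_graphs_on: "finite {card E |E. is_graph ({..<n::nat}, E) \<and> P E}"
proof (rule finite_subset)
  show "{card E |E. is_graph ({..<n}, E) \<and> P E} \<subseteq> card ` Pow (Pow {..<n})"
    using is_graph_edges_subset_Pow by blast
qed auto

lemma card_le_ex:
  assumes "is_graph ({..<n}, E)" "\<forall>H\<in>\<F>. \<not> contains_copy ({..<n}, E) H"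
  shows "card E \<le> ex n \<F>"
  unfolding ex_def using assms by (intro Max_ge finite_card_graphs_on) auto

lemma ex_le:
  assumes "\<forall>H\<in>\<F>. snd H \<noteq> {}"
    and "\<And>E. is_graph ({..<n}, E) \<Longrightarrow> \<forall>H\<in>\<F>. \<not> contains_copy ({..<n}, E) H \<Longrightarrow> card E \<le> B"
  shows "ex n \<F> \<le> B"
proof -
  have "is_graph ({..<n}, {})" "\<forall>H\<in>\<F>. \<not> contains_copy ({..<n}, {}) H"
    using assms(1) by (auto simp: is_graph_def contains_copy_def)
  then show ?thesis
    unfolding ex_def using assms(2) by (subst Max_le_iff) (auto intro: finite_card_graphs_on)
qed

(* Injective only on the non-isolated vertices of H: isolated vertices can be placed afterwards,
   provided the host graph is large enough. *)

definition edge_embedding :: "'b set set \<Rightarrow> 'a graph \<Rightarrow> ('a \<Rightarrow> 'b) \<Rightarrow> bool" where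
  "edge_embedding E H f \<longleftrightarrow> inj_on f (\<Union>(snd H)) \<and> (\<forall>e\<in>snd H. f ` e \<in> E)"

lemma edge_embedding_mono: "edge_embedding E H f \<Longrightarrow> E \<subseteq> E' \<Longrightarrow> edge_embedding E' H f"
  unfolding edge_embedding_def by blast

lemma edge_embedding_image_subset:
  "edge_embedding E H f \<Longrightarrow> \<forall>e\<in>E. e \<subseteq> S \<Longrightarrow> f ` \<Union>(snd H) \<subseteq> S"
  unfolding edge_embedding_def by blast

lemma edge_embedding_of_contains_copy:
  assumes "is_graph H" "contains_copy G H"
  obtains f where "edge_embedding (snd G) H f"
  using assms is_graph_Union_edges_subset unfolding contains_copy_def edge_embedding_def
  by (meson inj_on_subset)

lemma contains_copy_of_edge_embedding:
  assumes fin: "finite (fst H)" and N: "\<Union>(snd H) \<subseteq> fst H"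
    and f: "edge_embedding E H f" and E: "\<forall>e\<in>E. e \<subseteq> {..<n}" and n: "card (fst H) \<le> n"
  shows "contains_copy ({..<n}, E) H"
proof -
  let ?N = "\<Union>(snd H)"
  have finN: "finite ?N" using fin N by (rule finite_subset[rotated])
  have inj: "inj_on f ?N" and fE: "\<forall>e\<in>snd H. f ` e \<in> E"
    using f unfolding edge_embedding_def by auto
  have fN: "f ` ?N \<subseteq> {..<n}" using edge_embedding_image_subset[OF f E] .
  have "card (fst H - ?N) \<le> card ({..<n} - f ` ?N)"
    using card_Diff_subset[OF finN N] card_Diff_subset[OF _ fN] card_image[OF inj] finN n
    by (simp add: card_mono[OF fin N])
  then obtain g where g: "inj_on g (fst H - ?N)" "g ` (fst H - ?N) \<subseteq> {..<n} - f ` ?N"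
    using card_le_inj[of "fst H - ?N" "{..<n} - f ` ?N"] fin by auto
  define h where "h x = (if x \<in> ?N then f x else g x)" for x
  have "inj_on h (fst H)"
  proof (rule inj_onI)
    fix x y assume "x \<in> fst H" "y \<in> fst H" "h x = h y"
    moreover have "f u \<noteq> g z" if "u \<in> ?N" "z \<in> fst H - ?N" for u z
      using g(2) that by blast
    ultimately show "x = y"
      using inj g(1) unfolding h_def inj_on_def by (auto split: if_splits) metis+
  qed
  moreover have "h ` fst H \<subseteq> {..<n}"
    using fN g(2) unfolding h_def image_subset_iff by auto
  moreover have "h ` e = f ` e" if "e \<in> snd H" for e
    using that unfolding h_def by auto
  ultimately show ?thesis
    unfolding contains_copy_def using fE by auto
qed

definition rooted_copy :: "'b set set \<Rightarrow> 'a graph \<Rightarrow> 'a \<Rightarrow> 'a \<Rightarrow> 'b set \<Rightarrow> 'b set \<Rightarrow> bool" where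
  "rooted_copy E H x y e W \<longleftrightarrow>
     (\<exists>f. edge_embedding E H f \<and> f ` {x, y} = e \<and> f ` \<Union>(snd H) \<inter> W = {})"

definition unrooted_edges :: "'b set set \<Rightarrow> 'a graph \<Rightarrow> 'a \<Rightarrow> 'a \<Rightarrow> 'b set set" where
  "unrooted_edges E H x y = {e \<in> E. \<not> rooted_copy E H x y e {}}"

lemma card_unrooted_edges_le_ex:
  assumes G: "is_graph ({..<n}, E)" and H: "is_graph H" and xy: "{x, y} \<in> snd H"
  shows "card (unrooted_edges E H x y) \<le> ex n {H}"
  unfolding unrooted_edges_def
proof (rule card_le_ex)
  let ?F = "{e \<in> E. \<not> rooted_copy E H x y e {}}"
  show "is_graph ({..<n}, ?F)" using G unfolding is_graph_def by simp
  have "\<not> contains_copy ({..<n}, ?F) H"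
  proof
    assume "contains_copy ({..<n}, ?F) H"
    then obtain f where f: "edge_embedding ?F H f"
      using edge_embedding_of_contains_copy[OF H] by (metis snd_conv)
    then have "f ` {x, y} \<in> ?F" using xy unfolding edge_embedding_def by blast
    moreover have "rooted_copy E H x y (f ` {x, y}) {}"
      unfolding rooted_copy_def using edge_embedding_mono[OF f] by blast
    ultimately show False by blast
  qed
  then show "\<forall>H'\<in>{H}. \<not> contains_copy ({..<n}, ?F) H'" by simp
qed

lemma edge_embedding_identify:
  assumes f: "edge_embedding E H1 f" and g: "edge_embedding E H2 g"
    and ab: "{a, b} \<in> snd H1" and cd: "{c, d} \<in> snd H2"
    and fg: "f a = g c" "f b = g d"
    and disj: "f ` \<Union>(snd H1) \<inter> (g ` \<Union>(snd H2) - {g c, g d}) = {}"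
  shows "edge_embedding E (identify H1 H2 a b c d) (case_sum f g)"
proof -
  let ?m = "glue_map c d a b" and ?N1 = "\<Union>(snd H1)" and ?N2 = "\<Union>(snd H2)"
  have glue: "case_sum f g (?m v) = g v" for v
    using fg by (simp add: glue_map_def)
  have inj_f: "inj_on f ?N1" and inj_g: "inj_on g ?N2"
    using f g unfolding edge_embedding_def by auto
  have "?m v \<in> Inl ` ?N1 \<union> Inr ` (?N2 - {c, d})" if "v \<in> ?N2" for v
    using ab that by (auto simp: glue_map_def)
  then have vertices: "\<Union>(snd (identify H1 H2 a b c d)) \<subseteq> Inl ` ?N1 \<union> Inr ` (?N2 - {c, d})"
    unfolding identify_def by auto
  have "g ` (?N2 - {c, d}) = g ` ?N2 - {g c, g d}"
    using inj_on_image_set_diff[OF inj_g, of ?N2 "{c, d}"] cd by auto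
  then have "f ` ?N1 \<inter> g ` (?N2 - {c, d}) = {}"
    using disj by simp
  then have "case_sum f g ` Inl ` ?N1 \<inter> case_sum f g ` Inr ` (?N2 - {c, d}) = {}"
    by (simp add: image_image)
  moreover have "inj_on (case_sum f g) (Inl ` ?N1)"
    using inj_f by (intro inj_on_imageI) (simp add: comp_def)
  moreover have "inj_on (case_sum f g) (Inr ` (?N2 - {c, d}))"
    using inj_on_subset[OF inj_g] by (intro inj_on_imageI) (simp add: comp_def)
  ultimately have "inj_on (case_sum f g) (Inl ` ?N1 \<union> Inr ` (?N2 - {c, d}))"
    unfolding inj_on_Un by blast
  moreover have "case_sum f g ` e \<in> E" if "e \<in> snd (identify H1 H2 a b c d)" for e
    using that f g glue unfolding identify_def edge_embedding_def by (auto simp: image_image)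
  ultimately show ?thesis
    unfolding edge_embedding_def using inj_on_subset[OF _ vertices] by blast
qed

lemma contains_copy_identify_of_edge_embedding:
  assumes H1: "is_graph H1" and H2: "is_graph H2"
    and h: "edge_embedding E (identify H1 H2 a b x y) h"
    and E: "\<forall>e\<in>E. e \<subseteq> {..<n}" and n: "card (fst H1) + card (fst H2) \<le> n"
  shows "contains_copy ({..<n}, E) (identify H1 H2 a b x y)"
proof (rule contains_copy_of_edge_embedding[OF _ _ h E])
  have fin: "finite (fst H1)" "finite (fst H2)"
    using H1 H2 by (auto simp: is_graph_def)
  then show "finite (fst (identify H1 H2 a b x y))"
    by (simp add: identify_def)
  show "\<Union>(snd (identify H1 H2 a b x y)) \<subseteq> fst (identify H1 H2 a b x y)"
    using is_graph_Union_edges_subset[OF H1] is_graph_Union_edges_subset[OF H2]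
    unfolding identify_def by auto
  have "card (fst (identify H1 H2 a b x y))
      \<le> card (Inl ` fst H1 :: ('a + 'b) set) + card (glue_map x y a b ` fst H2)"
    by (simp add: identify_def card_Un_le)
  also have "\<dots> \<le> n"
    using card_image_le[OF fin(2), of "glue_map x y a b"] n by (simp add: card_image)
  finally show "card (fst (identify H1 H2 a b x y)) \<le> n" .
qed

lemma contains_identify_of_rooted_copies:
  assumes H1: "is_graph H1" and H2: "is_graph H2"
    and ab: "{a, b} \<in> snd H1" and cd: "{c, d} \<in> snd H2"
    and g: "edge_embedding E H2 g" and e: "g ` {c, d} = e"
    and f: "rooted_copy E H1 a b e (g ` \<Union>(snd H2) - e)"
    and E: "\<forall>e\<in>E. e \<subseteq> {..<n}" and n: "card (fst H1) + card (fst H2) \<le> n"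
  shows "\<exists>H\<in>identify_family H1 H2 a b c d. contains_copy ({..<n}, E) H"
proof -
  obtain f where f: "edge_embedding E H1 f" "f ` {a, b} = e"
    and avoid: "f ` \<Union>(snd H1) \<inter> (g ` \<Union>(snd H2) - e) = {}"
    using f unfolding rooted_copy_def by blast
  have disj: "f ` \<Union>(snd H1) \<inter> (g ` \<Union>(snd H2) - {g c, g d}) = {}"
    using avoid e by simp
  from f(2) e have "f a = g c \<and> f b = g d \<or> f a = g d \<and> f b = g c"
    by (auto simp: doubleton_eq_iff)
  then show ?thesis
  proof
    assume "f a = g c \<and> f b = g d"
    then have "edge_embedding E (identify H1 H2 a b c d) (case_sum f g)"
      using edge_embedding_identify[OF f(1) g ab cd _ _ disj] by blast
    then have "contains_copy ({..<n}, E) (identify H1 H2 a b c d)"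
      by (rule contains_copy_identify_of_edge_embedding[OF H1 H2 _ E n])
    then show ?thesis by (simp add: identify_family_def)
  next
    assume "f a = g d \<and> f b = g c"
    moreover have "{d, c} \<in> snd H2" using cd by (simp add: insert_commute)
    ultimately have "edge_embedding E (identify H1 H2 a b d c) (case_sum f g)"
      using edge_embedding_identify[OF f(1) g ab] disj by (simp add: insert_commute)
    then have "contains_copy ({..<n}, E) (identify H1 H2 a b d c)"
      by (rule contains_copy_identify_of_edge_embedding[OF H1 H2 _ E n])
    then show ?thesis by (simp add: identify_family_def)
  qed
qed

definition blockable_edges :: "nat \<Rightarrow> nat \<Rightarrow> nat set set \<Rightarrow> 'a graph \<Rightarrow> 'a \<Rightarrow> 'a \<Rightarrow> nat set set" where
  "blockable_edges n k E H x y =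
     {e \<in> E. \<exists>W \<subseteq> {..<n}. card W \<le> k \<and> W \<inter> e = {} \<and> \<not> rooted_copy E H x y e W}"

lemma rooted_copy_of_restriction:
  assumes "rooted_copy {e \<in> E. e \<subseteq> S} H x y e {}" "S \<inter> W = {}"
  shows "rooted_copy E H x y e W"
proof -
  obtain f where f: "edge_embedding {e \<in> E. e \<subseteq> S} H f" "f ` {x, y} = e"
    using assms(1) unfolding rooted_copy_def by blast
  have "f ` \<Union>(snd H) \<subseteq> S" using edge_embedding_image_subset[OF f(1)] by blast
  then show ?thesis
    unfolding rooted_copy_def using edge_embedding_mono[OF f(1)] f(2) assms(2) by blast
qed

lemma card_blockable_edges_le:
  assumes G: "is_graph ({..<n}, E)" and H: "is_graph H" and xy: "{x, y} \<in> snd H"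
  shows "card (blockable_edges n k E H x y) \<le> 2 ^ (k + 2) * ex n {H}"
proof -
  define F where "F S = unrooted_edges {e \<in> E. e \<subseteq> S} H x y" for S
  have E_sub: "E \<subseteq> Pow {..<n}" using is_graph_edges_subset_Pow[OF G] .
  have "card (blockable_edges n k E H x y) * 2 ^ (n - (k + 2)) \<le> card (Pow {..<n}) * ex n {H}"
  proof (rule card_double_counting_le[where F = F])
    show "finite (blockable_edges n k E H x y)"
      using E_sub unfolding blockable_edges_def by (auto intro: finite_subset)
    show "finite (F S)" for S
      using E_sub unfolding F_def unrooted_edges_def by (auto intro: finite_subset)
    show "card (F S) \<le> ex n {H}" for S
      unfolding F_def using G H xy
      by (intro card_unrooted_edges_le_ex) (auto simp: is_graph_def)
  next
    fix e assume "e \<in> blockable_edges n k E H x y"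
    then obtain W where e: "e \<in> E" and W: "W \<subseteq> {..<n}" "card W \<le> k" "W \<inter> e = {}"
      and blocked: "\<not> rooted_copy E H x y e W"
      unfolding blockable_edges_def by blast
    have card_e: "card e = 2"
      using e G unfolding is_graph_def by (auto simp: card_insert_if)
    have e_sub: "e \<subseteq> {..<n} - W" using e E_sub W(3) by blast
    have "n - (k + 2) \<le> card ({..<n} - W) - card e"
      using card_Diff_subset[OF finite_subset[OF W(1)] W(1)] W(2) card_e by simp
    then have "2 ^ (n - (k + 2)) \<le> card {S. e \<subseteq> S \<and> S \<subseteq> {..<n} - W}"
      using card_sets_between[OF _ e_sub] by simp
    also have "\<dots> \<le> card {S \<in> Pow {..<n}. e \<in> F S}"
    proof (rule card_mono)
      show "{S. e \<subseteq> S \<and> S \<subseteq> {..<n} - W} \<subseteq> {S \<in> Pow {..<n}. e \<in> F S}"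
      proof clarify
        fix S assume S: "e \<subseteq> S" "S \<subseteq> {..<n} - W"
        then have "\<not> rooted_copy {e \<in> E. e \<subseteq> S} H x y e {}"
          using blocked rooted_copy_of_restriction[of E S H x y e W] by blast
        then show "S \<in> Pow {..<n} \<and> e \<in> F S"
          unfolding F_def unrooted_edges_def using S e by blast
      qed
    qed simp
    finally show "2 ^ (n - (k + 2)) \<le> card {S \<in> Pow {..<n}. e \<in> F S}" .
  qed simp
  moreover have "card (Pow {..<n}) \<le> 2 ^ (k + 2) * 2 ^ (n - (k + 2))"
  proof -
    have "(2::nat) ^ n \<le> 2 ^ ((k + 2) + (n - (k + 2)))" by (rule power_increasing) simp_all
    then show ?thesis by (simp add: card_Pow power_add)
  qed
  ultimately have "card (blockable_edges n k E H x y) * 2 ^ (n - (k + 2))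
      \<le> 2 ^ (k + 2) * 2 ^ (n - (k + 2)) * ex n {H}"
    by (meson order_trans mult_le_mono1)
  then show ?thesis by (simp only: ac_simps mult_le_cancel2) simp
qed

lemma edges_subset_unrooted_Un_blockable:
  assumes G: "is_graph ({..<n}, E)" and H1: "is_graph H1" and H2: "is_graph H2"
    and ab: "{a, b} \<in> snd H1" and cd: "{c, d} \<in> snd H2"
    and free: "\<forall>H\<in>identify_family H1 H2 a b c d. \<not> contains_copy ({..<n}, E) H"
    and n: "card (fst H1) + card (fst H2) \<le> n"
  shows "E \<subseteq> unrooted_edges E H2 c d \<union> blockable_edges n (card (fst H2)) E H1 a b"
proof
  fix e assume "e \<in> E"
  show "e \<in> unrooted_edges E H2 c d \<union> blockable_edges n (card (fst H2)) E H1 a b"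
  proof (rule ccontr)
    assume "\<not> ?thesis"
    then obtain g where g: "edge_embedding E H2 g" "g ` {c, d} = e"
      and unblocked: "e \<notin> blockable_edges n (card (fst H2)) E H1 a b"
      using \<open>e \<in> E\<close> unfolding unrooted_edges_def rooted_copy_def by auto
    have E_bound: "\<forall>e\<in>E. e \<subseteq> {..<n}"
      using is_graph_edges_subset_Pow[OF G] by blast
    have "g ` \<Union>(snd H2) - e \<subseteq> {..<n}"
      using edge_embedding_image_subset[OF g(1) E_bound] by blast
    moreover have "card (g ` \<Union>(snd H2) - e) \<le> card (fst H2)"
    proof -
      have fin: "finite (fst H2)" using H2 by (simp add: is_graph_def)
      then have "finite (\<Union>(snd H2))"
        using is_graph_Union_edges_subset[OF H2] by (rule finite_subset[rotated])
      then have "card (g ` \<Union>(snd H2) - e) \<le> card (\<Union>(snd H2))"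
        by (meson Diff_subset card_image_le card_mono finite_imageI order_trans)
      also have "\<dots> \<le> card (fst H2)"
        by (rule card_mono[OF fin is_graph_Union_edges_subset[OF H2]])
      finally show ?thesis .
    qed
    ultimately have "rooted_copy E H1 a b e (g ` \<Union>(snd H2) - e)"
      using unblocked \<open>e \<in> E\<close> unfolding blockable_edges_def by blast
    then show False
      using contains_identify_of_rooted_copies[OF H1 H2 ab cd g _ E_bound n] free by blast
  qed
qed

lemma ex_identify_family_le:
  assumes H1: "is_graph H1" and H2: "is_graph H2"
    and ab: "{a, b} \<in> snd H1" and cd: "{c, d} \<in> snd H2"
    and n: "card (fst H1) + card (fst H2) \<le> n"
  shows "ex n (identify_family H1 H2 a b c d) \<le> ex n {H2} + 2 ^ (card (fst H2) + 2) * ex n {H1}"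
proof (rule ex_le)
  show "\<forall>H\<in>identify_family H1 H2 a b c d. snd H \<noteq> {}"
    using ab by (auto simp: identify_family_def identify_def)
next
  fix E assume G: "is_graph ({..<n}, E)"
    and free: "\<forall>H\<in>identify_family H1 H2 a b c d. \<not> contains_copy ({..<n}, E) H"
  have "finite E"
    using is_graph_edges_subset_Pow[OF G] by (auto intro: finite_subset)
  then have "card E \<le> card (unrooted_edges E H2 c d
      \<union> blockable_edges n (card (fst H2)) E H1 a b)"
    using edges_subset_unrooted_Un_blockable[OF G H1 H2 ab cd free n]
    by (intro card_mono) (auto simp: unrooted_edges_def blockable_edges_def)
  also have "\<dots> \<le> card (unrooted_edges E H2 c d)
      + card (blockable_edges n (card (fst H2)) E H1 a b)"
    by (rule card_Un_le)
  also have "\<dots> \<le> ex n {H2} + 2 ^ (card (fst H2) + 2) * ex n {H1}"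
    using card_unrooted_edges_le_ex[OF G H2 cd] card_blockable_edges_le[OF G H1 ab]
    by (rule add_mono)
  finally show "card E \<le> ex n {H2} + 2 ^ (card (fst H2) + 2) * ex n {H1}" .
qed
lemma powr_bigo_powr_mono:
  assumes "p \<le> q"
  shows "(\<lambda>n::nat. real n powr p) \<in> O(\<lambda>n. real n powr q)"
proof (rule landau_o.big_mono)
  show "\<forall>\<^sub>F n in at_top. norm (real n powr p) \<le> norm (real n powr q)"
    using eventually_ge_at_top[of "1::nat"]
    by eventually_elim (use assms in \<open>auto intro: powr_mono\<close>)
qed

lemma bigo_powr_of_le_sum:
  fixes f g h :: "nat \<Rightarrow> real" and K p q r :: real
  assumes g: "g \<in> O(\<lambda>n. real n powr p)" and h: "h \<in> O(\<lambda>n. real n powr q)"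
    and "p \<le> r" "q \<le> r"
    and le: "\<forall>\<^sub>F n in at_top. 0 \<le> f n \<and> f n \<le> g n + K * h n"
  shows "f \<in> O(\<lambda>n. real n powr r)"
proof -
  have "g \<in> O(\<lambda>n. real n powr r)"
    using landau_o.big_trans[OF g powr_bigo_powr_mono] \<open>p \<le> r\<close> .
  moreover have "h \<in> O(\<lambda>n. real n powr r)"
    using landau_o.big_trans[OF h powr_bigo_powr_mono] \<open>q \<le> r\<close> .
  ultimately have "(\<lambda>n. g n + K * h n) \<in> O(\<lambda>n. real n powr r)"
    by (intro sum_in_bigo) auto
  moreover have "f \<in> O(\<lambda>n. g n + K * h n)"
    using le by (intro landau_o.big_mono) (auto elim!: eventually_mono)
  ultimately show ?thesis
    using landau_o.big_trans by blast
qed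

theorem theorem1p2:
  fixes H1 :: "'a graph" and H2 :: "'b graph" and \<alpha> \<beta> :: real
    and a b :: 'a and c d :: 'b
  assumes "is_graph H1" "is_graph H2" "bipartite H1" "bipartite H2"
    and "(\<lambda>n. real (ex n {H1})) \<in> O(\<lambda>n. real n powr (1 + \<alpha>))"
    and "(\<lambda>n. real (ex n {H2})) \<in> O(\<lambda>n. real n powr (1 + \<beta>))"
    and "a \<noteq> b" "{a, b} \<in> snd H1"
    and "c \<noteq> d" "{c, d} \<in> snd H2"
  shows "(\<lambda>n. real (ex n (identify_family H1 H2 a b c d)))
           \<in> O(\<lambda>n. real n powr (1 + max \<alpha> \<beta>))"
proof -
  let ?K = "2 ^ (card (fst H2) + 2) :: nat"
  have bound: "\<forall>\<^sub>F n in at_top. 0 \<le> real (ex n (identify_family H1 H2 a b c d)) \<and>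
      real (ex n (identify_family H1 H2 a b c d)) \<le> real (ex n {H2}) + real ?K * real (ex n {H1})"
    using eventually_ge_at_top[of "card (fst H1) + card (fst H2)"]
  proof eventually_elim
    case (elim n)
    show ?case
      using ex_identify_family_le[OF assms(1,2,8,10) elim]
      by (metis of_nat_0_le_iff of_nat_add of_nat_le_iff of_nat_mult)
  qed
  show ?thesis
    using bigo_powr_of_le_sum[OF assms(6,5) _ _ bound] by simp
qed

end
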